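(* Let $G=(V,E)$ be a finite simple strongly connected directed graph with a fixed total order on $V$, let $W\subseteq V$ be strongly connected, $w\in W$, and let $\mathbf b$ be a spanning tree of $G$ rooted at $w$ with $\psi(\mathbf b)=W$. Let $\mathbf f$ be the set of edges of $\mathbf b$ whose source is not in $W$, and let $\mathfrak E$ be the set of vertices erased when running the exploration algorithm on $\mathbf b$. For each $u\in\mathfrak E$, let $e(u)$ be the edge (with source $u$, not in $\mathbf b$) whose processing caused $u$ to be erased. For $\mathfrak F\subseteq\mathfrak E$, let $\mathbf f_{\mathfrak F}$ be obtained from $\mathbf f$ by replacing, for each $u\in\mathfrak F$, the edge of $\mathbf f$ going out of $u$ by $e(u)$. Then for every $\mathfrak F\subseteq\mathfrak E$, $\mathbf f_{\mathfrak F}$ is a forest rooted in $W$.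
   Context: A spanning tree of $G$ is a subgraph on all vertices with no cycle, one vertex (root) of outdegree $0$ and all others of outdegree $1$. For nonempty $U\subseteq V$, a forest rooted in $U$ is a subgraph on all vertices with no cycle in which vertices of $U$ have outdegree $0$ and all others outdegree $1$. Exploration algorithm (depends on the fixed total order of $V$). Input: a spanning tree $\mathbf a$ rooted at $v$. Initialize $A=\{v\}$, $F=\{e: s(e)\neq v\}$, $\mathbf L$ = FIFO list of edges with target $v$, by increasing source. While $\mathbf L$ is nonempty, take its first edge $e$, with source $w'$: if $e\in\mathbf a$, add $w'$ to $A$, delete from $\mathbf L$ (and $F$) all edges with source $w'$, and append to $\mathbf L$ all edges of $F$ with target $w'$ by increasing source; otherwise delete from $\mathbf L$ and $F$ all edges with source or target $w'$, and $w'$ is said to be erased (by the edge $e$). At the end $\phi(\mathbf a)=A$ and $\psi(\mathbf a)$ is the strongly connected component of $v$ in the induced graph $G_{\phi(\mathbf a)}$. *)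

theory Defs
  imports Main "HOL-Library.While_Combinator"
begin

definition simple_digraph :: "'v set \<Rightarrow> ('v \<times> 'v) set \<Rightarrow> bool" where
  "simple_digraph V E \<longleftrightarrow> finite V \<and> E \<subseteq> V \<times> V \<and> (\<forall>x. (x, x) \<notin> E)"

definition induced :: "('v \<times> 'v) set \<Rightarrow> 'v set \<Rightarrow> ('v \<times> 'v) set" where
  "induced E S = E \<inter> (S \<times> S)"

definition strongly_connected :: "('v \<times> 'v) set \<Rightarrow> 'v set \<Rightarrow> bool" where
  "strongly_connected E S \<longleftrightarrow> (\<forall>x\<in>S. \<forall>y\<in>S. (x, y) \<in> (induced E S)\<^sup>*)"

definition outdeg :: "('v \<times> 'v) set \<Rightarrow> 'v \<Rightarrow> nat" where
  "outdeg a u = card {e \<in> a. fst e = u}"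

definition rooted_forest :: "'v set \<Rightarrow> ('v \<times> 'v) set \<Rightarrow> 'v set \<Rightarrow> ('v \<times> 'v) set \<Rightarrow> bool" where
  "rooted_forest V E U a \<longleftrightarrow> U \<noteq> {} \<and> U \<subseteq> V \<and> a \<subseteq> E \<and> acyclic a \<and>
     (\<forall>u\<in>U. outdeg a u = 0) \<and> (\<forall>u\<in>V - U. outdeg a u = 1)"

definition spanning_tree :: "'v set \<Rightarrow> ('v \<times> 'v) set \<Rightarrow> 'v \<Rightarrow> ('v \<times> 'v) set \<Rightarrow> bool" where
  "spanning_tree V E r a \<longleftrightarrow> rooted_forest V E {r} a"

text \<open>State of the exploration algorithm: (A, F, L, er), where er u = Some e records
  that u was erased by the edge e.\<close>
type_synonym 'v expl_state =
  "'v set \<times> ('v \<times> 'v) set \<times> ('v \<times> 'v) list \<times> ('v \<Rightarrow> ('v \<times> 'v) option)"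

definition in_edges_sorted :: "('v::linorder \<times> 'v) set \<Rightarrow> 'v \<Rightarrow> ('v \<times> 'v) list" where
  "in_edges_sorted F t = map (\<lambda>u. (u, t)) (sorted_list_of_set {u. (u, t) \<in> F})"

definition expl_init :: "('v::linorder \<times> 'v) set \<Rightarrow> 'v \<Rightarrow> 'v expl_state" where
  "expl_init E v = ({v}, {e \<in> E. fst e \<noteq> v}, in_edges_sorted E v, (\<lambda>_. None))"

definition expl_step :: "('v::linorder \<times> 'v) set \<Rightarrow> 'v expl_state \<Rightarrow> 'v expl_state" where
  "expl_step a s = (case s of (A, F, L, er) \<Rightarrow>
     (case L of
        [] \<Rightarrow> s
      | e # L' \<Rightarrow>
          (let w' = fst e in
           if e \<in> a then
             (let F' = {x \<in> F. fst x \<noteq> w'} in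
              (insert w' A, F', filter (\<lambda>x. fst x \<noteq> w') L' @ in_edges_sorted F' w', er))
           else
             (A, {x \<in> F. fst x \<noteq> w' \<and> snd x \<noteq> w'},
              filter (\<lambda>x. fst x \<noteq> w' \<and> snd x \<noteq> w') L', er(w' := Some e)))))"

definition explore :: "('v::linorder \<times> 'v) set \<Rightarrow> ('v \<times> 'v) set \<Rightarrow> 'v \<Rightarrow> 'v expl_state" where
  "explore E a v = the (while_option (\<lambda>(A, F, L, er). L \<noteq> []) (expl_step a) (expl_init E v))"

definition phi :: "('v::linorder \<times> 'v) set \<Rightarrow> ('v \<times> 'v) set \<Rightarrow> 'v \<Rightarrow> 'v set" where
  "phi E a v = fst (explore E a v)"

definition psi :: "('v::linorder \<times> 'v) set \<Rightarrow> ('v \<times> 'v) set \<Rightarrow> 'v \<Rightarrow> 'v set" where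
  "psi E a v = (let A = phi E a v in
     {u \<in> A. (v, u) \<in> (induced E A)\<^sup>* \<and> (u, v) \<in> (induced E A)\<^sup>*})"

definition erased_by :: "('v::linorder \<times> 'v) set \<Rightarrow> ('v \<times> 'v) set \<Rightarrow> 'v \<Rightarrow> 'v \<Rightarrow> ('v \<times> 'v) option" where
  "erased_by E a v = snd (snd (snd (explore E a v)))"

end

theory Submission
  imports Defs
begin

text \<open>In the exploration, an edge is erasing only when its source lies outside the explored
  set and its target inside, and the explored set is closed under the tree. Rerouting the
  vertices of \<open>\<FF>\<close> along their erasing edges therefore cannot create a cycle: a path that
  uses an erasing edge enters the explored set and from then on follows tree edges inside it,
  so it never returns to its start; a path using only tree edges is acyclic because the tree
  is. The outdegree conditions hold since each non-root vertex keeps exactly one out-edge.\<close>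

lemma outdeg_eq_0_iff:
  assumes "finite a"
  shows "outdeg a u = 0 \<longleftrightarrow> a `` {u} = {}"
  using assms unfolding outdeg_def by (force simp: card_eq_0_iff)

lemma outdeg_eq_1_imp_unique:
  assumes "outdeg a u = 1" and "(u, y) \<in> a" and "(u, z) \<in> a"
  shows "y = z"
proof -
  obtain c where c: "{e \<in> a. fst e = u} = {c}"
    using assms(1) unfolding outdeg_def by (rule card_1_singletonE)
  have "(u, y) \<in> {e \<in> a. fst e = u}" "(u, z) \<in> {e \<in> a. fst e = u}"
    using assms(2,3) by simp_all
  then show ?thesis unfolding c by auto
qed

lemma rooted_forest_finite:
  assumes "simple_digraph V E" and "rooted_forest V E U a"
  shows "finite a"
  using assms unfolding simple_digraph_def rooted_forest_def
  by (meson finite_SigmaI finite_subset)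

lemma rooted_forest_no_out_edges:
  assumes "simple_digraph V E" and "rooted_forest V E U a" and "u \<in> U"
  shows "a `` {u} = {}"
  using assms outdeg_eq_0_iff[OF rooted_forest_finite[OF assms(1,2)]]
  unfolding rooted_forest_def by blast

lemma rooted_forest_single_valued:
  assumes "simple_digraph V E" and "rooted_forest V E U a"
  shows "single_valued a"
proof (rule single_valuedI)
  fix x y z assume xy: "(x, y) \<in> a" and xz: "(x, z) \<in> a"
  have "x \<in> V" using xy assms unfolding simple_digraph_def rooted_forest_def by blast
  show "y = z"
  proof (cases "x \<in> U")
    case True
    then show ?thesis using rooted_forest_no_out_edges[OF assms] xy by blast
  next
    case False
    then have "outdeg a x = 1" using \<open>x \<in> V\<close> assms(2) unfolding rooted_forest_def by blast
    then show ?thesis using xy xz by (rule outdeg_eq_1_imp_unique)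
  qed
qed

lemma outdeg_reroute:
  assumes g: "\<And>u. u \<in> F \<Longrightarrow> fst (g u) = u"
  shows "outdeg ({e \<in> a. fst e \<notin> W \<and> fst e \<notin> F} \<union> g ` F) u =
           (if u \<in> F then 1 else if u \<in> W then 0 else outdeg a u)"
proof -
  have img: "{e \<in> g ` F. fst e = u} = (if u \<in> F then {g u} else {})"
    using g by (auto simp: image_iff) (metis fst_conv)
  have "{e \<in> {e \<in> a. fst e \<notin> W \<and> fst e \<notin> F} \<union> g ` F. fst e = u} =
          {e \<in> a. fst e = u \<and> u \<notin> W \<and> u \<notin> F} \<union> {e \<in> g ` F. fst e = u}"
    by blast
  then show ?thesis unfolding outdeg_def img by simp
qed

lemma trancl_Un_edges_into_closed:
  assumes closed: "a `` S \<subseteq> S"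
    and C: "C \<subseteq> (- S) \<times> S"
    and "(x, y) \<in> (a \<union> C)\<^sup>+"
  shows "(x, y) \<in> a\<^sup>+ \<or> (x \<notin> S \<and> y \<in> S)"
  using assms(3)
proof (induction rule: trancl_induct)
  case (base y)
  then show ?case using C by blast
next
  case (step y z)
  show ?case
  proof (cases "(x, y) \<in> a\<^sup>+")
    case xy: True
    show ?thesis
    proof (cases "(y, z) \<in> a")
      case True
      then show ?thesis using xy by (auto intro: trancl_into_trancl)
    next
      case False
      then have "y \<notin> S" "z \<in> S" using step.hyps(2) C by auto
      moreover have "x \<in> S \<Longrightarrow> y \<in> a\<^sup>* `` S" using trancl_into_rtrancl[OF xy] by blast
      ultimately show ?thesis unfolding Image_closed_trancl[OF closed] by blast
    qed
  next
    case False
    then have "y \<in> S" "x \<notin> S" using step.IH by auto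
    then have "(y, z) \<in> a" using step.hyps(2) C by blast
    then show ?thesis using \<open>y \<in> S\<close> \<open>x \<notin> S\<close> closed by blast
  qed
qed

lemma acyclic_Un_edges_into_closed:
  assumes "acyclic a" and "a `` S \<subseteq> S" and "C \<subseteq> (- S) \<times> S"
  shows "acyclic (a \<union> C)"
proof (rule acyclicI, intro allI notI)
  fix x assume "(x, x) \<in> (a \<union> C)\<^sup>+"
  with trancl_Un_edges_into_closed[OF assms(2,3)] have "(x, x) \<in> a\<^sup>+" by blast
  with assms(1) show False by (simp add: acyclic_def)
qed

text \<open>The last two clauses are what the theorem uses; the others keep them inductive.\<close>
definition expl_inv :: "('v \<times> 'v) set \<Rightarrow> ('v \<times> 'v) set \<Rightarrow> 'v \<Rightarrow> 'v expl_state \<Rightarrow> bool" where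
  "expl_inv E a v s \<longleftrightarrow> (case s of (A, F, L, er) \<Rightarrow>
     v \<in> A \<and> set L \<subseteq> F \<and> F \<subseteq> E \<and> (\<forall>e\<in>set L. snd e \<in> A) \<and>
     (\<forall>e\<in>F. fst e \<notin> A \<and> fst e \<notin> dom er) \<and>
     (\<forall>u e. er u = Some e \<longrightarrow> fst e = u \<and> e \<in> E \<and> u \<notin> A \<and> snd e \<in> A) \<and>
     a `` A \<subseteq> A)"

lemma set_in_edges_sorted:
  assumes "finite F"
  shows "set (in_edges_sorted F t) = {e \<in> F. snd e = t}"
proof -
  have "{u. (u, t) \<in> F} \<subseteq> fst ` F" by force
  then have "finite {u. (u, t) \<in> F}" using assms finite_subset by blast
  then show ?thesis unfolding in_edges_sorted_def by auto
qed

lemma expl_inv_init: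
  assumes "finite E" and "(v, v) \<notin> E" and "a `` {v} = {}"
  shows "expl_inv E a v (expl_init E v)"
  using assms unfolding expl_inv_def expl_init_def by (auto simp: set_in_edges_sorted)

lemma expl_inv_step:
  assumes inv: "expl_inv E a v (A, F, L, er)" and "L \<noteq> []" and "finite E"
    and sv: "single_valued a"
  shows "expl_inv E a v (expl_step a (A, F, L, er)) \<and>
         card (fst (snd (expl_step a (A, F, L, er)))) < card F"
proof -
  obtain w' t L' where L: "L = (w', t) # L'" using \<open>L \<noteq> []\<close> by (cases L) auto
  have "finite F" using inv \<open>finite E\<close> unfolding expl_inv_def by (auto intro: finite_subset)
  have e: "(w', t) \<in> F" "t \<in> A" "w' \<notin> A" "w' \<notin> dom er" "(w', t) \<in> E"
    using inv L unfolding expl_inv_def by auto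
  show ?thesis
  proof (cases "(w', t) \<in> a")
    case True
    let ?F' = "{x \<in> F. fst x \<noteq> w'}"
    have step: "expl_step a (A, F, L, er) =
        (insert w' A, ?F', filter (\<lambda>x. fst x \<noteq> w') L' @ in_edges_sorted ?F' w', er)"
      using True L unfolding expl_step_def by (simp add: Let_def)
    have "card ?F' < card F" by (rule psubset_card_mono[OF \<open>finite F\<close>]) (use e(1) in force)
    moreover have "a `` {w'} \<subseteq> A" using sv True e(2) by (auto dest: single_valuedD)
    ultimately show ?thesis
      unfolding step using inv L e(4) \<open>finite F\<close>
      unfolding expl_inv_def by (auto simp: set_in_edges_sorted)
  next
    case False
    let ?F' = "{x \<in> F. fst x \<noteq> w' \<and> snd x \<noteq> w'}"
    have step: "expl_step a (A, F, L, er) =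
        (A, ?F', filter (\<lambda>x. fst x \<noteq> w' \<and> snd x \<noteq> w') L', er(w' := Some (w', t)))"
      using False L unfolding expl_step_def by (simp add: Let_def)
    have "card ?F' < card F" by (rule psubset_card_mono[OF \<open>finite F\<close>]) (use e(1) in force)
    then show ?thesis
      unfolding step using inv L e unfolding expl_inv_def by auto
  qed
qed

lemma expl_inv_explore:
  assumes "finite E" and "(v, v) \<notin> E" and "single_valued a" and "a `` {v} = {}"
  shows "expl_inv E a v (explore E a v)"
proof -
  let ?b = "\<lambda>(A, F, L, er). L \<noteq> []"
  have init: "expl_inv E a v (expl_init E v)" using assms(1,2,4) by (rule expl_inv_init)
  have step: "\<And>s. expl_inv E a v s \<Longrightarrow> ?b s \<Longrightarrow>
      expl_inv E a v (expl_step a s) \<and> card (fst (snd (expl_step a s))) < card (fst (snd s))"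
    using expl_inv_step assms(1,3) by fastforce
  obtain t where t: "while_option ?b (expl_step a) (expl_init E v) = Some t"
    using measure_while_option_Some[where f = "\<lambda>s. card (fst (snd s))", OF step init] by blast
  have "expl_inv E a v t"
    by (rule while_option_rule[where P = "expl_inv E a v", OF _ t init]) (use step in blast)
  then show ?thesis unfolding explore_def t by simp
qed

lemma phi_closed:
  assumes "finite E" and "(v, v) \<notin> E" and "single_valued a" and "a `` {v} = {}"
  shows "a `` phi E a v \<subseteq> phi E a v"
  using expl_inv_explore[OF assms] unfolding phi_def expl_inv_def by (auto split: prod.splits)

lemma erased_by_SomeD:
  assumes "finite E" and "(v, v) \<notin> E" and "single_valued a" and "a `` {v} = {}"
    and "erased_by E a v u = Some e"
  shows "fst e = u \<and> e \<in> E \<and> u \<notin> phi E a v \<and> snd e \<in> phi E a v"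
  using expl_inv_explore[OF assms(1-4)] assms(5)
  unfolding phi_def erased_by_def expl_inv_def by (cases e) (auto split: prod.splits)

theorem lemma4p4:
  fixes V :: "'v::linorder set" and E :: "('v \<times> 'v) set"
    and W :: "'v set" and w :: 'v and b :: "('v \<times> 'v) set"
  assumes G: "simple_digraph V E"
    and Gsc: "strongly_connected E V"
    and WV: "W \<subseteq> V"
    and Wsc: "strongly_connected E W"
    and wW: "w \<in> W"
    and b: "spanning_tree V E w b"
    and psib: "psi E b w = W"
    and FE: "\<FF> \<subseteq> dom (erased_by E b w)"
  shows "rooted_forest V E W
           ({e \<in> b. fst e \<notin> W \<and> fst e \<notin> \<FF>} \<union> (\<lambda>u. the (erased_by E b w u)) ` \<FF>)"
proof -
  let ?A = "phi E b w" and ?g = "\<lambda>u. the (erased_by E b w u)"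
  let ?f = "{e \<in> b. fst e \<notin> W \<and> fst e \<notin> \<FF>} \<union> ?g ` \<FF>"
  have bf: "rooted_forest V E {w} b" using b unfolding spanning_tree_def .
  then have bE: "b \<subseteq> E" and "acyclic b" and b_out: "\<forall>u\<in>V - {w}. outdeg b u = 1"
    unfolding rooted_forest_def by auto
  have expl: "finite E" "(w, w) \<notin> E" "single_valued b" "b `` {w} = {}"
    using G rooted_forest_single_valued[OF G bf] rooted_forest_no_out_edges[OF G bf]
    unfolding simple_digraph_def by (auto intro: finite_subset)
  have g: "fst (?g u) = u \<and> ?g u \<in> E \<and> u \<notin> ?A \<and> snd (?g u) \<in> ?A" if "u \<in> \<FF>" for u
    using erased_by_SomeD[OF expl] FE that by fastforce
  have WA: "W \<subseteq> ?A" using psib unfolding psi_def Let_def by auto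
  have f_out: "outdeg ?f u = (if u \<in> \<FF> then 1 else if u \<in> W then 0 else outdeg b u)" for u
    by (rule outdeg_reroute) (use g in blast)
  have "\<FF> \<inter> W = {}" using g WA by blast
  have into: "?g ` \<FF> \<subseteq> (- ?A) \<times> ?A" using g by (intro image_subsetI) (simp add: mem_Times_iff)
  have "acyclic (b \<union> ?g ` \<FF>)" using acyclic_Un_edges_into_closed[OF \<open>acyclic b\<close> phi_closed[OF expl] into] .
  then have "acyclic ?f" by (rule acyclic_subset) blast
  moreover have "?f \<subseteq> E" using bE g by blast
  moreover have "(\<forall>u\<in>W. outdeg ?f u = 0) \<and> (\<forall>u\<in>V - W. outdeg ?f u = 1)"
    using \<open>\<FF> \<inter> W = {}\<close> b_out wW by (auto simp only: f_out split: if_splits)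
  ultimately show ?thesis using wW WV unfolding rooted_forest_def by blast
qed

end
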